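(* For two swm-graphs $G$ and $H$, the thickening of the Cartesian product equals the strong product of the thickenings: $(G\times H)^{\varDelta}=G^{\varDelta}\otimes H^{\varDelta}$.
   Context: Graphs are connected, simple, undirected, possibly infinite; $d$ is the shortest-path metric. Weakly modular graph: (TC) for vertices $x,y,z$ with $d(x,y)=1$ and $d(x,z)=d(y,z)$ there is a common neighbor $u$ of $x,y$ with $d(u,z)=d(x,z)-1$; (QC) for $x,y,w,z$ with $d(x,y)=2$, $d(w,x)=d(w,y)=1$, $d(w,z)-1=d(x,z)=d(y,z)$ there is a common neighbor $u$ of $x,y$ with $d(u,z)=d(x,z)-1$. An swm-graph is a weakly modular graph with no induced $K_4^-$ and no isometric $K_{3,3}^-$ subgraph ($K_4$, $K_{3,3}$ minus one edge). A nonempty vertex set $X$ is gated if for every vertex $x$ there is $y\in X$ with $d(x,z)=d(x,y)+d(y,z)$ for all $z\in X$; it is Boolean-gated if it is gated and induces a connected thick subgraph (any two vertices at distance 2 have two common neighbors at distance 2 from each other). The thickening $G^{\varDelta}$ is obtained from $G$ by joining every pair of distinct vertices lying in a common Boolean-gated set. The Cartesian product $G\times H$ has vertex set $V(G)\times V(H)$ with $(x,y)\sim(x',y')$ iff ($x=x'$ and $yy'\in E(H)$) or ($y=y'$ and $xx'\in E(G)$). The strong product $G\otimes H$ has vertex set $V(G)\times V(H)$ with distinct $(x,y),(x',y')$ adjacent iff $x,x'$ are equal or adjacent and $y,y'$ are equal or adjacent. *)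

theory Defs
  imports Main
begin

text \<open>A graph is given by its adjacency relation on the vertex type (vertex set = UNIV).
  Simple undirected: symmetric and irreflexive; connected: any two vertices joined by a walk.\<close>

definition graph :: "('a \<Rightarrow> 'a \<Rightarrow> bool) \<Rightarrow> bool" where
  "graph E \<longleftrightarrow> (\<forall>x y. E x y \<longrightarrow> E y x) \<and> (\<forall>x. \<not> E x x)
      \<and> (\<forall>x y. \<exists>n. (E ^^ n) x y)"

definition gdist :: "('a \<Rightarrow> 'a \<Rightarrow> bool) \<Rightarrow> 'a \<Rightarrow> 'a \<Rightarrow> nat" where
  "gdist E x y = (LEAST n. (E ^^ n) x y)"

definition triangle_cond :: "('a \<Rightarrow> 'a \<Rightarrow> bool) \<Rightarrow> bool" where
  "triangle_cond E \<longleftrightarrow> (\<forall>x y z. gdist E x y = 1 \<and> gdist E x z = gdist E y z \<longrightarrow>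
     (\<exists>u. E u x \<and> E u y \<and> gdist E u z = gdist E x z - 1))"

definition quadrangle_cond :: "('a \<Rightarrow> 'a \<Rightarrow> bool) \<Rightarrow> bool" where
  "quadrangle_cond E \<longleftrightarrow> (\<forall>x y w z. gdist E x y = 2 \<and> gdist E w x = 1 \<and> gdist E w y = 1
     \<and> gdist E w z - 1 = gdist E x z \<and> gdist E x z = gdist E y z \<longrightarrow>
     (\<exists>u. E u x \<and> E u y \<and> gdist E u z = gdist E x z - 1))"

definition weakly_modular :: "('a \<Rightarrow> 'a \<Rightarrow> bool) \<Rightarrow> bool" where
  "weakly_modular E \<longleftrightarrow> graph E \<and> triangle_cond E \<and> quadrangle_cond E"

definition has_induced_K4minus :: "('a \<Rightarrow> 'a \<Rightarrow> bool) \<Rightarrow> bool" where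
  "has_induced_K4minus E \<longleftrightarrow> (\<exists>a b c d. distinct [a, b, c, d] \<and>
     E a b \<and> E a c \<and> E a d \<and> E b c \<and> E b d \<and> \<not> E c d)"

text \<open>Isometric K33 minus an edge: six distinct vertices x1 x2 x3 y1 y2 y3 with all edges
  xi yj except x1 y1 present, and the graph distance between any two of them equal to their
  distance in K33 minus x1y1 (1 for the edges, 2 inside a side, 3 between x1 and y1).\<close>
definition has_isometric_K33minus :: "('a \<Rightarrow> 'a \<Rightarrow> bool) \<Rightarrow> bool" where
  "has_isometric_K33minus E \<longleftrightarrow> (\<exists>x1 x2 x3 y1 y2 y3. distinct [x1, x2, x3, y1, y2, y3] \<and>
     E x1 y2 \<and> E x1 y3 \<and> E x2 y1 \<and> E x2 y2 \<and> E x2 y3 \<and> E x3 y1 \<and> E x3 y2 \<and> E x3 y3 \<and>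
     gdist E x1 y2 = 1 \<and> gdist E x1 y3 = 1 \<and> gdist E x2 y1 = 1 \<and> gdist E x2 y2 = 1 \<and>
     gdist E x2 y3 = 1 \<and> gdist E x3 y1 = 1 \<and> gdist E x3 y2 = 1 \<and> gdist E x3 y3 = 1 \<and>
     gdist E x1 x2 = 2 \<and> gdist E x1 x3 = 2 \<and> gdist E x2 x3 = 2 \<and>
     gdist E y1 y2 = 2 \<and> gdist E y1 y3 = 2 \<and> gdist E y2 y3 = 2 \<and>
     gdist E x1 y1 = 3)"

definition swm_graph :: "('a \<Rightarrow> 'a \<Rightarrow> bool) \<Rightarrow> bool" where
  "swm_graph E \<longleftrightarrow> weakly_modular E \<and> \<not> has_induced_K4minus E \<and> \<not> has_isometric_K33minus E"

definition gated :: "('a \<Rightarrow> 'a \<Rightarrow> bool) \<Rightarrow> 'a set \<Rightarrow> bool" where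
  "gated E X \<longleftrightarrow> X \<noteq> {} \<and> (\<forall>x. \<exists>y\<in>X. \<forall>z\<in>X. gdist E x z = gdist E x y + gdist E y z)"

definition induced :: "('a \<Rightarrow> 'a \<Rightarrow> bool) \<Rightarrow> 'a set \<Rightarrow> 'a \<Rightarrow> 'a \<Rightarrow> bool" where
  "induced E X u v \<longleftrightarrow> u \<in> X \<and> v \<in> X \<and> E u v"

definition connected_thick_on :: "('a \<Rightarrow> 'a \<Rightarrow> bool) \<Rightarrow> 'a set \<Rightarrow> bool" where
  "connected_thick_on E X \<longleftrightarrow>
     (\<forall>u\<in>X. \<forall>v\<in>X. \<exists>n. (induced E X ^^ n) u v) \<and>
     (\<forall>u\<in>X. \<forall>v\<in>X. gdist (induced E X) u v = 2 \<longrightarrow>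
        (\<exists>w\<in>X. \<exists>w'\<in>X. induced E X u w \<and> induced E X w v \<and> induced E X u w' \<and> induced E X w' v
           \<and> gdist (induced E X) w w' = 2))"

definition boolean_gated :: "('a \<Rightarrow> 'a \<Rightarrow> bool) \<Rightarrow> 'a set \<Rightarrow> bool" where
  "boolean_gated E X \<longleftrightarrow> gated E X \<and> connected_thick_on E X"

definition thickening :: "('a \<Rightarrow> 'a \<Rightarrow> bool) \<Rightarrow> 'a \<Rightarrow> 'a \<Rightarrow> bool" where
  "thickening E u v \<longleftrightarrow> u \<noteq> v \<and> (\<exists>X. boolean_gated E X \<and> u \<in> X \<and> v \<in> X)"

definition cartesian_prod :: "('a \<Rightarrow> 'a \<Rightarrow> bool) \<Rightarrow> ('b \<Rightarrow> 'b \<Rightarrow> bool) \<Rightarrow> ('a \<times> 'b) \<Rightarrow> ('a \<times> 'b) \<Rightarrow> bool" where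
  "cartesian_prod E F p q \<longleftrightarrow> (fst p = fst q \<and> F (snd p) (snd q)) \<or> (snd p = snd q \<and> E (fst p) (fst q))"

definition strong_prod :: "('a \<Rightarrow> 'a \<Rightarrow> bool) \<Rightarrow> ('b \<Rightarrow> 'b \<Rightarrow> bool) \<Rightarrow> ('a \<times> 'b) \<Rightarrow> ('a \<times> 'b) \<Rightarrow> bool" where
  "strong_prod E F p q \<longleftrightarrow> p \<noteq> q \<and> (fst p = fst q \<or> E (fst p) (fst q)) \<and> (snd p = snd q \<or> F (snd p) (snd q))"

end

theory Submission
  imports Defs
begin

text \<open>Distances in the Cartesian product add up over the factors. Hence a gated set X of
  \<open>G \<times> H\<close> is a box: for (a, b) and (a', b') in X, the gate of (a, b') in X lies on
  geodesics to both, which forces it to be (a, b') itself. Gatedness, connectedness and thickness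
  pass between a box and its factors; for thickness, two vertices at distance 2 in a box differ by
  2 in one coordinate, or by 1 in each, and then the two remaining corners of the square are the
  required common neighbours. So the Boolean-gated sets of \<open>G \<times> H\<close> are exactly the
  products of Boolean-gated sets of G and H, and two vertices lie in a common one iff each pair
  of coordinates is equal or lies in a common Boolean-gated set of its factor, which is adjacency
  in the strong product of the thickenings.\<close>

lemma gdist_le: "(E ^^ n) x y \<Longrightarrow> gdist E x y \<le> n"
  unfolding gdist_def by (rule Least_le)

lemma relpowp_gdist: "(E ^^ n) x y \<Longrightarrow> (E ^^ gdist E x y) x y"
  unfolding gdist_def by (rule LeastI)

lemma gdist_self [simp]: "gdist E x x = 0"
  using gdist_le[where E=E and n=0 and x=x and y=x] by simp

lemma gdist_eq_0_iff:
  assumes "(E ^^ n) x y"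
  shows "gdist E x y = 0 \<longleftrightarrow> x = y"
  using relpowp_gdist[OF assms] by auto

lemma gdist_eq_1_iff:
  assumes "(E ^^ n) x y"
  shows "gdist E x y = 1 \<longleftrightarrow> E x y \<and> x \<noteq> y"
proof
  assume "gdist E x y = 1"
  then show "E x y \<and> x \<noteq> y"
    using relpowp_gdist[OF assms] by auto
next
  assume "E x y \<and> x \<noteq> y"
  then have "gdist E x y \<le> 1" "gdist E x y \<noteq> 0"
    using gdist_le[where E=E and n=1] gdist_eq_0_iff[OF assms] by auto
  then show "gdist E x y = 1" by simp
qed

lemma gdist_triangle:
  assumes "(E ^^ m) x y" and "(E ^^ n) y z"
  shows "gdist E x z \<le> gdist E x y + gdist E y z"
  using relpowp_trans[OF relpowp_gdist[OF assms(1)] relpowp_gdist[OF assms(2)]] by (rule gdist_le)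

lemma graph_connected:
  assumes "graph E"
  obtains n where "(E ^^ n) x y"
  using assms unfolding graph_def by blast

lemma relpowp_pullback:
  assumes "bij f"
  shows "((\<lambda>x y. E (f x) (f y)) ^^ n) x y \<longleftrightarrow> (E ^^ n) (f x) (f y)"
proof (induction n arbitrary: y)
  case 0
  show ?case using bij_is_inj[OF assms] by (auto dest: injD)
next
  case (Suc n)
  have "(\<exists>z. (E ^^ n) (f x) (f z) \<and> E (f z) (f y)) \<longleftrightarrow>
      (\<exists>z'. (E ^^ n) (f x) z' \<and> E z' (f y))"
    using bij_is_surj[OF assms] by (metis surjD)
  then show ?case using Suc.IH by (auto simp: relpowp_Suc_right)
qed

lemma gdist_pullback:
  "bij f \<Longrightarrow> gdist (\<lambda>x y. E (f x) (f y)) x y = gdist E (f x) (f y)"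
  unfolding gdist_def by (simp add: relpowp_pullback)

lemma induced_pullback:
  "induced (\<lambda>x y. E (f x) (f y)) (f -` X) = (\<lambda>x y. induced E X (f x) (f y))"
  unfolding induced_def by auto

lemma boolean_gated_pullback:
  assumes "bij f"
  shows "boolean_gated (\<lambda>x y. E (f x) (f y)) (f -` X) \<longleftrightarrow> boolean_gated E X"
proof -
  have vimage: "f -` X = inv f ` X"
    using assms by (simp add: bij_vimage_eq_inv_image)
  have inv: "f (inv f y) = y" for y
    using assms by (simp add: bij_is_surj surj_f_inv_f)
  have all: "(\<forall>x. P (f x)) \<longleftrightarrow> (\<forall>y. P y)" for P
    by (metis inv)
  show ?thesis
    unfolding boolean_gated_def gated_def connected_thick_on_def induced_pullback
    by (simp add: gdist_pullback relpowp_pullback assms vimage inv) (subst all, rule refl)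
qed

lemma relpowp_cartesian_prod_iff:
  "(cartesian_prod E F ^^ n) p q \<longleftrightarrow>
     (\<exists>i j. n = i + j \<and> (E ^^ i) (fst p) (fst q) \<and> (F ^^ j) (snd p) (snd q))"
proof
  show "(cartesian_prod E F ^^ n) p q \<Longrightarrow>
      \<exists>i j. n = i + j \<and> (E ^^ i) (fst p) (fst q) \<and> (F ^^ j) (snd p) (snd q)"
  proof (induction n arbitrary: q)
    case (Suc n)
    obtain r where "(cartesian_prod E F ^^ n) p r" and "cartesian_prod E F r q"
      using Suc.prems by (rule relpowp_Suc_E)
    moreover obtain i j where "n = i + j" "(E ^^ i) (fst p) (fst r)" "(F ^^ j) (snd p) (snd r)"
      using Suc.IH calculation(1) by blast
    moreover have "fst r = fst q \<and> F (snd r) (snd q) \<or> snd r = snd q \<and> E (fst r) (fst q)"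
      using \<open>cartesian_prod E F r q\<close> unfolding cartesian_prod_def .
    ultimately show ?case
      by (metis add_Suc add_Suc_right relpowp_Suc_I)
  qed simp
next
  have fst: "(cartesian_prod E F ^^ i) (a, b) (a', b)" if "(E ^^ i) a a'" for i a a' b
    using that by (induction i arbitrary: a') (fastforce simp: cartesian_prod_def)+
  have snd: "(cartesian_prod E F ^^ j) (a, b) (a, b')" if "(F ^^ j) b b'" for j a b b'
    using that by (induction j arbitrary: b') (fastforce simp: cartesian_prod_def)+
  show "\<exists>i j. n = i + j \<and> (E ^^ i) (fst p) (fst q) \<and> (F ^^ j) (snd p) (snd q) \<Longrightarrow>
      (cartesian_prod E F ^^ n) p q"
    using relpowp_trans[OF fst snd] by (metis prod.collapse)
qed

lemma gdist_cartesian_prod: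
  assumes "(E ^^ i) a a'" and "(F ^^ j) b b'"
  shows "gdist (cartesian_prod E F) (a, b) (a', b') = gdist E a a' + gdist F b b'"
proof (rule antisym)
  show "gdist (cartesian_prod E F) (a, b) (a', b') \<le> gdist E a a' + gdist F b b'"
    using relpowp_gdist[OF assms(1)] relpowp_gdist[OF assms(2)]
    by (intro gdist_le) (auto simp: relpowp_cartesian_prod_iff)
  have "(cartesian_prod E F ^^ (i + j)) (a, b) (a', b')"
    using assms by (auto simp: relpowp_cartesian_prod_iff)
  then obtain k l where "gdist (cartesian_prod E F) (a, b) (a', b') = k + l"
    and "(E ^^ k) a a'" and "(F ^^ l) b b'"
    using relpowp_gdist by (fastforce simp: relpowp_cartesian_prod_iff)
  then show "gdist E a a' + gdist F b b' \<le> gdist (cartesian_prod E F) (a, b) (a', b')"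
    using gdist_le add_mono by metis
qed

lemma gdist_cartesian_prod_graph:
  assumes "graph G" and "graph H"
  shows "gdist (cartesian_prod G H) (a, b) (a', b') = gdist G a a' + gdist H b b'"
  using graph_connected[OF assms(1)] graph_connected[OF assms(2)] gdist_cartesian_prod
  by metis

lemma relpowp_induced_eq:
  assumes "\<And>p q. p \<in> A \<Longrightarrow> S p q \<Longrightarrow> q \<in> A" and "p \<in> A"
  shows "(induced S A ^^ n) p q \<longleftrightarrow> (S ^^ n) p q"
  using assms(2)
proof (induction n arbitrary: p)
  case (Suc n)
  have "(induced S A ^^ Suc n) p q \<longleftrightarrow> (\<exists>r. S p r \<and> r \<in> A \<and> (induced S A ^^ n) r q)"
    using Suc.prems unfolding relpowp_Suc_left OO_def induced_def by blast
  also have "\<dots> \<longleftrightarrow> (\<exists>r. S p r \<and> (S ^^ n) r q)"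
    using Suc assms(1) by blast
  finally show ?case
    unfolding relpowp_Suc_left OO_def .
qed simp

lemma induced_cartesian_prod:
  "induced (cartesian_prod G H) (X1 \<times> X2) =
     induced (cartesian_prod (induced G X1) (induced H X2)) (X1 \<times> X2)"
  by (auto simp: induced_def cartesian_prod_def fun_eq_iff)

lemma relpowp_induced_cartesian_prod:
  assumes "p \<in> X1 \<times> X2"
  shows "(induced (cartesian_prod G H) (X1 \<times> X2) ^^ n) p q \<longleftrightarrow>
     (cartesian_prod (induced G X1) (induced H X2) ^^ n) p q"
proof -
  have closed: "q \<in> X1 \<times> X2"
    if "p \<in> X1 \<times> X2" and "cartesian_prod (induced G X1) (induced H X2) p q" for p q
    using that unfolding cartesian_prod_def induced_def by (auto simp: mem_Times_iff)
  show ?thesis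
    using relpowp_induced_eq[where S="cartesian_prod (induced G X1) (induced H X2)", OF closed assms]
    unfolding induced_cartesian_prod[symmetric] .
qed

lemma gdist_induced_cartesian_prod:
  assumes "(a, b) \<in> X1 \<times> X2"
    and "(induced G X1 ^^ i) a a'" and "(induced H X2 ^^ j) b b'"
  shows "gdist (induced (cartesian_prod G H) (X1 \<times> X2)) (a, b) (a', b') =
     gdist (induced G X1) a a' + gdist (induced H X2) b b'"
proof -
  have "gdist (cartesian_prod (induced G X1) (induced H X2)) (a, b) (a', b') =
      gdist (induced G X1) a a' + gdist (induced H X2) b b'"
    using assms(2,3) by (rule gdist_cartesian_prod)
  then show ?thesis
    unfolding gdist_def relpowp_induced_cartesian_prod[OF assms(1)] .
qed

lemma gated_Times:
  assumes "graph G" and "graph H" and "gated G X1" and "gated H X2"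
  shows "gated (cartesian_prod G H) (X1 \<times> X2)"
  unfolding gated_def
proof (intro conjI allI)
  show "X1 \<times> X2 \<noteq> {}"
    using assms(3,4) by (simp add: gated_def)
  fix x :: "'a \<times> 'b"
  obtain x1 x2 where x: "x = (x1, x2)"
    by fastforce
  obtain y1 where "y1 \<in> X1" and gate1: "\<forall>z\<in>X1. gdist G x1 z = gdist G x1 y1 + gdist G y1 z"
    using assms(3) unfolding gated_def by blast
  obtain y2 where "y2 \<in> X2" and gate2: "\<forall>z\<in>X2. gdist H x2 z = gdist H x2 y2 + gdist H y2 z"
    using assms(4) unfolding gated_def by blast
  have "gdist (cartesian_prod G H) x (z1, z2) =
      gdist (cartesian_prod G H) x (y1, y2) + gdist (cartesian_prod G H) (y1, y2) (z1, z2)"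
    if "z1 \<in> X1" and "z2 \<in> X2" for z1 z2
    using gate1[rule_format, OF that(1)] gate2[rule_format, OF that(2)]
    unfolding x gdist_cartesian_prod_graph[OF assms(1,2)] by linarith
  then show "\<exists>y\<in>X1 \<times> X2. \<forall>z\<in>X1 \<times> X2. gdist (cartesian_prod G H) x z =
      gdist (cartesian_prod G H) x y + gdist (cartesian_prod G H) y z"
    using \<open>y1 \<in> X1\<close> \<open>y2 \<in> X2\<close> by blast
qed

lemma gated_cartesian_prod_eq_Times:
  assumes "graph G" and "graph H" and "gated (cartesian_prod G H) X"
  shows "X = fst ` X \<times> snd ` X"
proof
  show "fst ` X \<times> snd ` X \<subseteq> X"
  proof (clarsimp simp: image_iff)
    fix a b a' b'
    assume ab: "(a, b) \<in> X" and ab': "(a', b') \<in> X"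
    let ?d = "gdist (cartesian_prod G H)"
    obtain y1 y2 where "(y1, y2) \<in> X"
      and gate: "\<forall>z\<in>X. ?d (a, b') z = ?d (a, b') (y1, y2) + ?d (y1, y2) z"
      using assms(3) unfolding gated_def by fastforce
    have "gdist H b' b = gdist G a y1 + gdist H b' y2 + gdist G y1 a + gdist H y2 b"
      using gate[rule_format, OF ab] by (simp add: gdist_cartesian_prod_graph[OF assms(1,2)])
    moreover have "gdist G a a' = gdist G a y1 + gdist H b' y2 + gdist G y1 a' + gdist H y2 b'"
      using gate[rule_format, OF ab'] by (simp add: gdist_cartesian_prod_graph[OF assms(1,2)])
    moreover have "gdist H b' b \<le> gdist H b' y2 + gdist H y2 b"
      using graph_connected[OF assms(2)] gdist_triangle by metis
    moreover have "gdist G a a' \<le> gdist G a y1 + gdist G y1 a'"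
      using graph_connected[OF assms(1)] gdist_triangle by metis
    ultimately have "gdist G a y1 = 0" and "gdist H b' y2 = 0"
      by linarith+
    then have "a = y1" and "b' = y2"
      using graph_connected[OF assms(1)] graph_connected[OF assms(2)] gdist_eq_0_iff by metis+
    then show "(a, b') \<in> X"
      using \<open>(y1, y2) \<in> X\<close> by simp
  qed
qed (auto intro: rev_image_eqI)

lemma gated_fst_factor:
  assumes "graph G" and "graph H" and "X2 \<noteq> {}" and "gated (cartesian_prod G H) (X1 \<times> X2)"
  shows "gated G X1"
  unfolding gated_def
proof (intro conjI allI)
  show "X1 \<noteq> {}"
    using assms(4) by (auto simp: gated_def)
  obtain b where b: "b \<in> X2"
    using assms(3) by blast
  fix x
  let ?d = "gdist (cartesian_prod G H)"
  obtain y where y: "y \<in> X1 \<times> X2"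
    and gate: "\<forall>z\<in>X1 \<times> X2. ?d (x, b) z = ?d (x, b) y + ?d y z"
    using assms(4) unfolding gated_def by blast
  obtain y1 y2 where "y = (y1, y2)"
    by fastforce
  have "gdist G x z = gdist G x y1 + gdist G y1 z" if "z \<in> X1" for z
  proof -
    have "gdist G x z = gdist G x y1 + gdist H b y2 + gdist G y1 z + gdist H y2 b"
      using gate[rule_format, of "(z, b)"] that b \<open>y = (y1, y2)\<close>
      by (simp add: gdist_cartesian_prod_graph[OF assms(1,2)])
    moreover have "gdist G x z \<le> gdist G x y1 + gdist G y1 z"
      using graph_connected[OF assms(1)] gdist_triangle by metis
    ultimately show ?thesis by linarith
  qed
  then show "\<exists>y\<in>X1. \<forall>z\<in>X1. gdist G x z = gdist G x y + gdist G y z"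
    using y \<open>y = (y1, y2)\<close> by blast
qed

lemma connected_thick_on_Times:
  assumes "graph G" and "connected_thick_on G X1" and "connected_thick_on H X2"
  shows "connected_thick_on (cartesian_prod G H) (X1 \<times> X2)"
proof -
  let ?R = "induced (cartesian_prod G H) (X1 \<times> X2)"
  let ?g = "induced G X1" and ?h = "induced H X2"
  have conn_g: "\<exists>n. (?g ^^ n) a a'" if "a \<in> X1" "a' \<in> X1" for a a'
    using assms(2) that unfolding connected_thick_on_def by blast
  have conn_h: "\<exists>n. (?h ^^ n) b b'" if "b \<in> X2" "b' \<in> X2" for b b'
    using assms(3) that unfolding connected_thick_on_def by blast
  have dist: "gdist ?R (a, b) (a', b') = gdist ?g a a' + gdist ?h b b'"
    if mem: "a \<in> X1" "b \<in> X2" "a' \<in> X1" "b' \<in> X2" for a b a' b'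
  proof -
    obtain i j where "(?g ^^ i) a a'" and "(?h ^^ j) b b'"
      using conn_g[OF mem(1,3)] conn_h[OF mem(2,4)] by blast
    then show ?thesis
      using mem by (intro gdist_induced_cartesian_prod) auto
  qed
  have "\<exists>n. (?R ^^ n) p q" if "p \<in> X1 \<times> X2" "q \<in> X1 \<times> X2" for p q
    using conn_g[of "fst p" "fst q"] conn_h[of "snd p" "snd q"] that
    by (auto simp: relpowp_induced_cartesian_prod relpowp_cartesian_prod_iff)
  moreover have "\<exists>w\<in>X1 \<times> X2. \<exists>w'\<in>X1 \<times> X2.
      ?R p w \<and> ?R w q \<and> ?R p w' \<and> ?R w' q \<and> gdist ?R w w' = 2"
    if p: "p \<in> X1 \<times> X2" and q: "q \<in> X1 \<times> X2" and pq: "gdist ?R p q = 2" for p q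
  proof -
    obtain a b a' b' where ab: "p = (a, b)" "a \<in> X1" "b \<in> X2"
      and ab': "q = (a', b')" "a' \<in> X1" "b' \<in> X2"
      using p q by blast
    obtain i j where i: "(?g ^^ i) a a'" and j: "(?h ^^ j) b b'"
      using conn_g[OF ab(2) ab'(2)] conn_h[OF ab(3) ab'(3)] by blast
    have "gdist ?g a a' + gdist ?h b b' = 2"
      using pq dist ab ab' by simp
    then consider "gdist ?g a a' = 2" "b = b'" | "gdist ?g a a' = 1" "gdist ?h b b' = 1"
      | "a = a'" "gdist ?h b b' = 2"
      using gdist_eq_0_iff[OF i] gdist_eq_0_iff[OF j] by fastforce
    then show ?thesis
    proof cases
      case 1
      then obtain c c' where "c \<in> X1" "c' \<in> X1"
        and "?g a c" "?g c a'" "?g a c'" "?g c' a'" "gdist ?g c c' = 2"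
        using assms(2) ab(2) ab'(2) unfolding connected_thick_on_def by blast
      then show ?thesis
        using ab ab' 1 dist[of c b c' b]
        by (intro bexI[of _ "(c, b)"] bexI[of _ "(c', b)"])
          (auto simp: induced_def cartesian_prod_def)
    next
      case 2
      then have adj: "?g a a'" "?h b b'" and "a \<noteq> a'"
        using gdist_eq_1_iff[OF i] gdist_eq_1_iff[OF j] by auto
      moreover have "?g a' a"
        using adj(1) assms(1) unfolding graph_def induced_def by blast
      moreover obtain i' where "(?g ^^ i') a' a"
        using conn_g[OF ab'(2) ab(2)] by blast
      ultimately have "gdist ?g a' a = 1"
        using gdist_eq_1_iff by metis
      then show ?thesis
        using 2 adj ab ab' dist[of a' b a b']
        by (intro bexI[of _ "(a', b)"] bexI[of _ "(a, b')"])
          (auto simp: induced_def cartesian_prod_def)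
    next
      case 3
      then obtain c c' where "c \<in> X2" "c' \<in> X2"
        and "?h b c" "?h c b'" "?h b c'" "?h c' b'" "gdist ?h c c' = 2"
        using assms(3) ab(3) ab'(3) unfolding connected_thick_on_def by blast
      then show ?thesis
        using ab ab' 3 dist[of a c a c']
        by (intro bexI[of _ "(a, c)"] bexI[of _ "(a, c')"])
          (auto simp: induced_def cartesian_prod_def)
    qed
  qed
  ultimately show ?thesis
    unfolding connected_thick_on_def by blast
qed

lemma connected_thick_on_fst_factor:
  assumes "graph H" and "b \<in> X2" and "connected_thick_on (cartesian_prod G H) (X1 \<times> X2)"
  shows "connected_thick_on G X1"
proof -
  let ?R = "induced (cartesian_prod G H) (X1 \<times> X2)"
  let ?g = "induced G X1" and ?h = "induced H X2"
  have conn_R: "\<forall>p\<in>X1 \<times> X2. \<forall>q\<in>X1 \<times> X2. \<exists>n. (?R ^^ n) p q"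
    using assms(3) unfolding connected_thick_on_def by blast
  have conn_g: "\<exists>n. (?g ^^ n) a a'" if mem: "a \<in> X1" "a' \<in> X1" for a a'
  proof -
    obtain n where "(?R ^^ n) (a, b) (a', b)"
      using conn_R[rule_format, of "(a, b)" "(a', b)"] mem assms(2) by auto
    then show ?thesis
      using mem assms(2) by (auto simp: relpowp_induced_cartesian_prod relpowp_cartesian_prod_iff)
  qed
  have dist: "gdist ?R (a, b) (a', b) = gdist ?g a a'" if mem: "a \<in> X1" "a' \<in> X1" for a a'
  proof -
    obtain n where "(?g ^^ n) a a'"
      using conn_g[OF mem] by blast
    then have "gdist ?R (a, b) (a', b) = gdist ?g a a' + gdist ?h b b"
      using mem assms(2) by (intro gdist_induced_cartesian_prod[where j=0]) auto
    then show ?thesis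
      by simp
  qed
  have common_neighbour: "\<exists>c. w = (c, b) \<and> G u c \<and> G c v"
    if "cartesian_prod G H (u, b) w" and "cartesian_prod G H w (v, b)" and "u \<noteq> v" for u v w
    using that assms(1) unfolding graph_def cartesian_prod_def by (cases w) auto
  have "\<exists>c\<in>X1. \<exists>c'\<in>X1. ?g u c \<and> ?g c v \<and> ?g u c' \<and> ?g c' v \<and> gdist ?g c c' = 2"
    if u: "u \<in> X1" and v: "v \<in> X1" and uv: "gdist ?g u v = 2" for u v
  proof -
    have "gdist ?R (u, b) (v, b) = 2"
      using dist u v uv by simp
    then obtain w w' where "w \<in> X1 \<times> X2" "w' \<in> X1 \<times> X2"
      and "?R (u, b) w" "?R w (v, b)" "?R (u, b) w'" "?R w' (v, b)"
      and ww': "gdist ?R w w' = 2"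
      using assms(2,3) u v unfolding connected_thick_on_def by blast
    moreover have "u \<noteq> v"
      using uv by auto
    ultimately obtain c c' where "w = (c, b)" "G u c" "G c v" and "w' = (c', b)" "G u c'" "G c' v"
      using common_neighbour[of u w v] common_neighbour[of u w' v]
      unfolding induced_def by blast
    moreover have "c \<in> X1" "c' \<in> X1"
      using \<open>w \<in> X1 \<times> X2\<close> \<open>w' \<in> X1 \<times> X2\<close> calculation by auto
    ultimately show ?thesis
      using u v ww' dist unfolding induced_def by auto
  qed
  then show ?thesis
    unfolding connected_thick_on_def using conn_g by blast
qed

lemma boolean_gated_fst_factor:
  assumes "graph G" and "graph H" and "X2 \<noteq> {}"
    and "boolean_gated (cartesian_prod G H) (X1 \<times> X2)"
  shows "boolean_gated G X1"
proof -
  obtain b where "b \<in> X2"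
    using assms(3) by blast
  then show ?thesis
    using assms(4) gated_fst_factor[OF assms(1-3)] connected_thick_on_fst_factor[OF assms(2)]
    unfolding boolean_gated_def by blast
qed

lemma boolean_gated_cartesian_prod_swap:
  "boolean_gated (cartesian_prod H G) (X2 \<times> X1) \<longleftrightarrow> boolean_gated (cartesian_prod G H) (X1 \<times> X2)"
proof -
  have "cartesian_prod H G = (\<lambda>p q. cartesian_prod G H (prod.swap p) (prod.swap q))"
    by (auto simp: cartesian_prod_def fun_eq_iff)
  moreover have "prod.swap -` (X1 \<times> X2) = X2 \<times> X1"
    by auto
  ultimately show ?thesis
    using boolean_gated_pullback[OF bij_swap] by metis
qed

lemma boolean_gated_Times_iff:
  assumes "graph G" and "graph H" and "X1 \<noteq> {}" and "X2 \<noteq> {}"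
  shows "boolean_gated (cartesian_prod G H) (X1 \<times> X2) \<longleftrightarrow>
    boolean_gated G X1 \<and> boolean_gated H X2"
  using boolean_gated_fst_factor[OF assms(1,2,4)] boolean_gated_fst_factor[OF assms(2,1,3)]
    boolean_gated_cartesian_prod_swap gated_Times[OF assms(1,2)] connected_thick_on_Times[OF assms(1)]
  unfolding boolean_gated_def by blast

lemma boolean_gated_cartesian_prod_iff:
  assumes "graph G" and "graph H"
  shows "boolean_gated (cartesian_prod G H) X \<longleftrightarrow>
    (\<exists>X1 X2. X = X1 \<times> X2 \<and> boolean_gated G X1 \<and> boolean_gated H X2)"
proof
  assume bg: "boolean_gated (cartesian_prod G H) X"
  then have "X = fst ` X \<times> snd ` X" and "X \<noteq> {}"
    using gated_cartesian_prod_eq_Times[OF assms] unfolding boolean_gated_def gated_def by auto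
  then show "\<exists>X1 X2. X = X1 \<times> X2 \<and> boolean_gated G X1 \<and> boolean_gated H X2"
    using bg boolean_gated_Times_iff[OF assms] by (metis image_is_empty)
next
  assume "\<exists>X1 X2. X = X1 \<times> X2 \<and> boolean_gated G X1 \<and> boolean_gated H X2"
  then obtain X1 X2 where "X = X1 \<times> X2" and bg: "boolean_gated G X1" "boolean_gated H X2"
    by blast
  moreover have "X1 \<noteq> {}" "X2 \<noteq> {}"
    using bg unfolding boolean_gated_def gated_def by simp_all
  ultimately show "boolean_gated (cartesian_prod G H) X"
    using boolean_gated_Times_iff[OF assms] by simp
qed

lemma boolean_gated_singleton: "boolean_gated E {x}"
  unfolding boolean_gated_def gated_def connected_thick_on_def by (auto intro: relpowp_0_I)

lemma eq_or_thickening_iff: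
  "x = y \<or> thickening E x y \<longleftrightarrow> (\<exists>X. boolean_gated E X \<and> x \<in> X \<and> y \<in> X)"
  unfolding thickening_def using boolean_gated_singleton[of E x] by auto

theorem lemma2p18:
  fixes G :: "'a \<Rightarrow> 'a \<Rightarrow> bool" and H :: "'b \<Rightarrow> 'b \<Rightarrow> bool"
  assumes "swm_graph G" and "swm_graph H"
  shows "thickening (cartesian_prod G H) = strong_prod (thickening G) (thickening H)"
proof (intro ext)
  fix p q :: "'a \<times> 'b"
  have graphs: "graph G" "graph H"
    using assms unfolding swm_graph_def weakly_modular_def by blast+
  have "thickening (cartesian_prod G H) p q \<longleftrightarrow>
      p \<noteq> q \<and> (\<exists>X. boolean_gated (cartesian_prod G H) X \<and> p \<in> X \<and> q \<in> X)"
    unfolding thickening_def ..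
  also have "\<dots> \<longleftrightarrow> p \<noteq> q \<and> (\<exists>X1. boolean_gated G X1 \<and> fst p \<in> X1 \<and> fst q \<in> X1)
      \<and> (\<exists>X2. boolean_gated H X2 \<and> snd p \<in> X2 \<and> snd q \<in> X2)"
    unfolding boolean_gated_cartesian_prod_iff[OF graphs]
    by (auto simp: mem_Times_iff) (metis mem_Times_iff)
  also have "\<dots> \<longleftrightarrow> strong_prod (thickening G) (thickening H) p q"
    unfolding strong_prod_def eq_or_thickening_iff ..
  finally show "thickening (cartesian_prod G H) p q \<longleftrightarrow>
      strong_prod (thickening G) (thickening H) p q" .
qed

end
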